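(* Let $\Omega\subset\mathbb{C}$ be a simply connected domain and let $(g,\mathcal{P},\mathcal{Q})$ be a Weierstrass data of the first kind on $\Omega$. Define $h:=\frac{1}{g}$ and $\mathcal{N}:=2\mathcal{P}$. Then there exists a $\mathcal{C}^2$ function $\mathcal{M}:\Omega\to\mathbb{R}$ such that $$\mathcal{M}_z=\frac{1}{g}\,\mathcal{P}_z+g\,\mathcal{Q}_z .$$ Moreover, for any such $\mathcal{M}$, the triple $(h,\mathcal{M},\mathcal{N})$ is a Weierstrass data of the second kind on $\Omega$, and $$\mathcal{M}_z-(\mathrm{Re}\,h)\,\mathcal{N}_z=-\frac{1}{\overline{g}}\left(\mathcal{P}_z-|g|^2\mathcal{Q}_z\right).$$
   Context: $\Omega\subset\mathbb{R}^2\equiv\mathbb{C}$ has complex coordinate $z=u+iv$, and $\partial_z=\frac12(\partial_u-i\partial_v)$, $\partial_{\overline z}=\frac12(\partial_u+i\partial_v)$; subscripts denote partial derivatives. A Weierstrass data of the first kind on $\Omega$ is a triple $(g,\mathcal{P},\mathcal{Q})$ where $g:\Omega\to\mathbb{C}\setminus\{0\}$ and $\mathcal{P},\mathcal{Q}:\Omega\to\mathbb{R}$ are $\mathcal{C}^2$, satisfying $g_{\overline z}=0$, $\mathcal{P}_{z\overline z}=|g|^2\mathcal{Q}_{z\overline z}$, and $\mathcal{P}_z-|g|^2\mathcal{Q}_z\neq0$ at every point of $\Omega$. A Weierstrass data of the second kind on $\Omega$ is a triple $(h,\mathcal{M},\mathcal{N})$ where $h:\Omega\to\mathbb{C}\setminus\{0\}$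 and $\mathcal{M},\mathcal{N}:\Omega\to\mathbb{R}$ are $\mathcal{C}^2$, satisfying $h_{\overline z}=0$, $\mathcal{M}_{z\overline z}=(\mathrm{Re}\,h)\,\mathcal{N}_{z\overline z}$, and $\mathcal{M}_z-(\mathrm{Re}\,h)\,\mathcal{N}_z\neq0$ at every point of $\Omega$. *)

theory Defs
  imports "HOL-Analysis.Analysis"
begin

definition pu :: "(complex \<Rightarrow> complex) \<Rightarrow> complex \<Rightarrow> complex" where
  "pu f z = vector_derivative (\<lambda>t::real. f (z + of_real t)) (at 0)"

definition pv :: "(complex \<Rightarrow> complex) \<Rightarrow> complex \<Rightarrow> complex" where
  "pv f z = vector_derivative (\<lambda>t::real. f (z + \<i> * of_real t)) (at 0)"

definition dz :: "(complex \<Rightarrow> complex) \<Rightarrow> complex \<Rightarrow> complex" where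
  "dz f z = (pu f z - \<i> * pv f z) / 2"

definition dzb :: "(complex \<Rightarrow> complex) \<Rightarrow> complex \<Rightarrow> complex" where
  "dzb f z = (pu f z + \<i> * pv f z) / 2"

definition cr :: "(complex \<Rightarrow> real) \<Rightarrow> complex \<Rightarrow> complex" where
  "cr f = (\<lambda>z. complex_of_real (f z))"

definition C1_on :: "complex set \<Rightarrow> (complex \<Rightarrow> complex) \<Rightarrow> bool" where
  "C1_on S f \<longleftrightarrow> (\<forall>z\<in>S. f differentiable (at z)) \<and>
      continuous_on S (pu f) \<and> continuous_on S (pv f)"

definition C2_on :: "complex set \<Rightarrow> (complex \<Rightarrow> complex) \<Rightarrow> bool" where
  "C2_on S f \<longleftrightarrow> C1_on S f \<and> C1_on S (pu f) \<and> C1_on S (pv f)"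

definition WD1 :: "complex set \<Rightarrow> (complex \<Rightarrow> complex) \<Rightarrow> (complex \<Rightarrow> real) \<Rightarrow> (complex \<Rightarrow> real) \<Rightarrow> bool" where
  "WD1 \<Omega> g P Q \<longleftrightarrow>
     C2_on \<Omega> g \<and> C2_on \<Omega> (cr P) \<and> C2_on \<Omega> (cr Q) \<and>
     (\<forall>z\<in>\<Omega>. g z \<noteq> 0) \<and>
     (\<forall>z\<in>\<Omega>. dzb g z = 0) \<and>
     (\<forall>z\<in>\<Omega>. dz (dzb (cr P)) z = complex_of_real ((cmod (g z))\<^sup>2) * dz (dzb (cr Q)) z) \<and>
     (\<forall>z\<in>\<Omega>. dz (cr P) z - complex_of_real ((cmod (g z))\<^sup>2) * dz (cr Q) z \<noteq> 0)"

definition WD2 :: "complex set \<Rightarrow> (complex \<Rightarrow> complex) \<Rightarrow> (complex \<Rightarrow> real) \<Rightarrow> (complex \<Rightarrow> real) \<Rightarrow> bool" where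
  "WD2 \<Omega> h M N \<longleftrightarrow>
     C2_on \<Omega> h \<and> C2_on \<Omega> (cr M) \<and> C2_on \<Omega> (cr N) \<and>
     (\<forall>z\<in>\<Omega>. h z \<noteq> 0) \<and>
     (\<forall>z\<in>\<Omega>. dzb h z = 0) \<and>
     (\<forall>z\<in>\<Omega>. dz (dzb (cr M)) z = complex_of_real (Re (h z)) * dz (dzb (cr N)) z) \<and>
     (\<forall>z\<in>\<Omega>. dz (cr M) z - complex_of_real (Re (h z)) * dz (cr N) z \<noteq> 0)"

end

theory Submission
  imports Defs "HOL-Complex_Analysis.Complex_Analysis"
begin

text \<open>Put \<open>F = dz P / g + g dz Q\<close>. As \<open>g\<close> is holomorphic and \<open>dz (dzb P) = |g|\<^sup>2 dz (dzb Q)\<close>,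
  one gets \<open>dzb F = (g + cnj g) dz (dzb Q)\<close>, which is real because the Laplacian of a real \<open>C\<^sup>2\<close>
  function is real (symmetry of mixed partials). Hence the real 1-form \<open>Re (F dz)\<close> is closed. On a
  disc it has a potential by radial integration, and by the Riemann mapping theorem on every simply
  connected domain; twice this potential is a real \<open>M\<close> with \<open>dz M = F\<close>. Conversely, for any
  such \<open>M\<close>, \<open>dzb M = cnj F\<close>, so \<open>dz (dzb M) = cnj (dzb F) = 2 Re g dz (dzb Q) = Re (1/g) dz (dzb N)\<close>
  since \<open>Re (1/g) |g|\<^sup>2 = Re g\<close>. The first-order identity is algebra, and it shows that the
  non-degeneracy condition carries over.\<close>

section \<open>Real partial derivatives\<close>

definition differential :: "(complex \<Rightarrow> complex) \<Rightarrow> complex \<Rightarrow> complex \<Rightarrow> complex" where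
  "differential f z h = of_real (Re h) * pu f z + of_real (Im h) * pv f z"

lemma has_vector_derivative_along_line:
  fixes w d :: complex
  assumes "(f has_derivative D) (at (w + d * of_real t0))"
  shows "((\<lambda>t::real. f (w + d * of_real t)) has_vector_derivative D d) (at t0)"
proof -
  have "((\<lambda>t::real. w + d * of_real t) has_derivative (\<lambda>s. s *\<^sub>R d)) (at t0)"
    using has_derivative_add[OF has_derivative_const
        has_derivative_mult_right[OF has_derivative_of_real[OF has_derivative_ident]], of w d]
    by (simp add: scaleR_conv_of_real mult.commute)
  from has_derivative_compose[OF this assms]
  have "((\<lambda>t. f (w + d * of_real t)) has_derivative (\<lambda>s. s *\<^sub>R D d)) (at t0)"
    by (simp add: linear_scale[OF has_derivative_linear[OF assms]])
  then show ?thesis unfolding has_vector_derivative_def .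
qed

lemma pu_eq_derivative: "(f has_derivative D) (at z) \<Longrightarrow> pu f z = D 1"
  unfolding pu_def using has_vector_derivative_along_line[of f D z 1 0]
  by (simp add: vector_derivative_at)

lemma pv_eq_derivative: "(f has_derivative D) (at z) \<Longrightarrow> pv f z = D \<i>"
  unfolding pv_def using has_vector_derivative_along_line[of f D z \<i> 0]
  by (simp add: vector_derivative_at)

lemma has_derivative_differential:
  assumes "f differentiable (at z)"
  shows "(f has_derivative differential f z) (at z)"
proof -
  obtain D where D: "(f has_derivative D) (at z)"
    using assms unfolding differentiable_def by blast
  have "D h = differential f z h" for h
  proof -
    have "D h = D (Re h *\<^sub>R 1 + Im h *\<^sub>R \<i>)"
      by (rule arg_cong[of _ _ D]) (simp add: complex_eq_iff)
    also have "\<dots> = Re h *\<^sub>R D 1 + Im h *\<^sub>R D \<i>"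
      using has_derivative_linear[OF D] by (simp add: linear_add linear_scale)
    finally show ?thesis
      by (simp add: differential_def pu_eq_derivative[OF D] pv_eq_derivative[OF D] scaleR_conv_of_real)
  qed
  then have "D = differential f z" ..
  with D show ?thesis by simp
qed

lemma pu_pv_cong:
  assumes "open S" "z \<in> S" "\<And>w. w \<in> S \<Longrightarrow> f w = g w"
  shows "pu f z = pu g z" "pv f z = pv g z"
proof -
  have near: "eventually (\<lambda>t::real. z + d * of_real t \<in> S) (nhds 0)" for d
  proof -
    have "open ((\<lambda>t::real. z + d * of_real t) -` S)"
      by (rule continuous_open_vimage[OF assms(1)]) (intro continuous_intros)
    then show ?thesis
      using eventually_nhds_in_open[of _ 0] assms(2) by fastforce
  qed
  have "eventually (\<lambda>t::real. t \<in> UNIV \<longrightarrow> f (z + d * of_real t) = g (z + d * of_real t)) (nhds 0)" for d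
    using near[of d] by eventually_elim (simp add: assms(3))
  from vector_derivative_cong_eq[OF this[of 1]] vector_derivative_cong_eq[OF this[of \<i>]]
  show "pu f z = pu g z" "pv f z = pv g z" by (simp_all add: pu_def pv_def)
qed

lemma pu_pv_lincomb:
  assumes "f differentiable (at z)" "g differentiable (at z)"
  shows "pu (\<lambda>w. a * f w + b * g w) z = a * pu f z + b * pu g z"
    and "pv (\<lambda>w. a * f w + b * g w) z = a * pv f z + b * pv g z"
proof -
  have "((\<lambda>w. a * f w + b * g w) has_derivative
      (\<lambda>h. a * differential f z h + b * differential g z h)) (at z)"
    using assms by (intro derivative_intros has_derivative_differential)
  from pu_eq_derivative[OF this] pv_eq_derivative[OF this]
  show "pu (\<lambda>w. a * f w + b * g w) z = a * pu f z + b * pu g z"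
    and "pv (\<lambda>w. a * f w + b * g w) z = a * pv f z + b * pv g z"
    by (simp_all add: differential_def)
qed

lemma pu_pv_mult:
  assumes "f differentiable (at z)" "g differentiable (at z)"
  shows "pu (\<lambda>w. f w * g w) z = pu f z * g z + f z * pu g z"
    and "pv (\<lambda>w. f w * g w) z = pv f z * g z + f z * pv g z"
proof -
  have "((\<lambda>w. f w * g w) has_derivative
      (\<lambda>h. f z * differential g z h + differential f z h * g z)) (at z)"
    using assms by (intro derivative_intros has_derivative_differential)
  from pu_eq_derivative[OF this] pv_eq_derivative[OF this]
  show "pu (\<lambda>w. f w * g w) z = pu f z * g z + f z * pu g z"
    and "pv (\<lambda>w. f w * g w) z = pv f z * g z + f z * pv g z"
    by (simp_all add: differential_def)
qed

lemma pu_pv_cnj: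
  assumes "f differentiable (at z)"
  shows "pu (\<lambda>w. cnj (f w)) z = cnj (pu f z)" "pv (\<lambda>w. cnj (f w)) z = cnj (pv f z)"
proof -
  have "((\<lambda>w. cnj (f w)) has_derivative (\<lambda>h. cnj (differential f z h))) (at z)"
    using assms by (intro has_derivative_cnj has_derivative_differential)
  from pu_eq_derivative[OF this] pv_eq_derivative[OF this]
  show "pu (\<lambda>w. cnj (f w)) z = cnj (pu f z)" "pv (\<lambda>w. cnj (f w)) z = cnj (pv f z)"
    by (simp_all add: differential_def)
qed

lemma real_valued_partials:
  assumes "open S" "z \<in> S" "\<And>w. w \<in> S \<Longrightarrow> Im (f w) = 0" "f differentiable (at z)"
  shows "Im (pu f z) = 0" "Im (pv f z) = 0"
proof -
  have "((\<lambda>w. Im (f w)) has_derivative (\<lambda>h. Im (differential f z h))) (at z)"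
    using assms(4) by (intro bounded_linear.has_derivative[OF bounded_linear_Im] has_derivative_differential)
  moreover have "((\<lambda>w. Im (f w)) has_derivative (\<lambda>h. 0)) (at z)"
    by (rule has_derivative_transform_within_open[OF has_derivative_const assms(1,2)])
       (simp add: assms(3))
  ultimately have "(\<lambda>h. Im (differential f z h)) = (\<lambda>h. 0)"
    by (rule has_derivative_unique)
  from fun_cong[OF this, of 1] fun_cong[OF this, of \<i>]
  show "Im (pu f z) = 0" "Im (pv f z) = 0" by (simp_all add: differential_def)
qed

section \<open>\<open>C\<^sup>1\<close> and \<open>C\<^sup>2\<close> functions\<close>

lemma C1_on_imp_differentiable: "C1_on S f \<Longrightarrow> z \<in> S \<Longrightarrow> f differentiable (at z)"
  unfolding C1_on_def by blast

lemma C1_on_imp_continuous_on: "C1_on S f \<Longrightarrow> continuous_on S f"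
  by (metis C1_on_imp_differentiable continuous_at_imp_continuous_on
      differentiable_imp_continuous_within)

lemma C1_onI_partials:
  assumes "\<And>z. z \<in> S \<Longrightarrow> f differentiable (at z)"
    and "continuous_on S a" "continuous_on S b"
    and "\<And>z. z \<in> S \<Longrightarrow> pu f z = a z" "\<And>z. z \<in> S \<Longrightarrow> pv f z = b z"
  shows "C1_on S f"
proof -
  have "continuous_on S (pu f)" "continuous_on S (pv f)"
    using continuous_on_eq[OF assms(2)] continuous_on_eq[OF assms(3)] assms(4,5) by auto
  with assms(1) show ?thesis unfolding C1_on_def by blast
qed

lemma C1_on_cong:
  assumes "open S" "\<And>z. z \<in> S \<Longrightarrow> f z = g z" "C1_on S f"
  shows "C1_on S g"
proof (rule C1_onI_partials)
  fix z assume z: "z \<in> S"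
  obtain D where "(f has_derivative D) (at z)"
    using C1_on_imp_differentiable[OF assms(3) z] unfolding differentiable_def by blast
  then have "(g has_derivative D) (at z)"
    by (rule has_derivative_transform_within_open[OF _ assms(1) z]) (simp add: assms(2))
  then show "g differentiable (at z)" unfolding differentiable_def by blast
  show "pu g z = pu f z" "pv g z = pv f z"
    using pu_pv_cong[OF assms(1) z assms(2)] by simp_all
qed (use assms(3) in \<open>simp_all add: C1_on_def\<close>)

lemma C1_on_lincomb:
  assumes "C1_on S f" "C1_on S g"
  shows "C1_on S (\<lambda>z. a * f z + b * g z)"
proof (rule C1_onI_partials)
  show "continuous_on S (\<lambda>z. a * pu f z + b * pu g z)"
    and "continuous_on S (\<lambda>z. a * pv f z + b * pv g z)"
    using assms unfolding C1_on_def by (auto intro!: continuous_intros)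
  fix z assume "z \<in> S"
  with assms have "f differentiable (at z)" "g differentiable (at z)"
    by (simp_all add: C1_on_imp_differentiable)
  then show "(\<lambda>z. a * f z + b * g z) differentiable (at z)"
    and "pu (\<lambda>z. a * f z + b * g z) z = a * pu f z + b * pu g z"
    and "pv (\<lambda>z. a * f z + b * g z) z = a * pv f z + b * pv g z"
    by (simp_all add: pu_pv_lincomb derivative_intros)
qed

lemma C1_on_mult:
  assumes "C1_on S f" "C1_on S g"
  shows "C1_on S (\<lambda>z. f z * g z)"
proof (rule C1_onI_partials)
  show "continuous_on S (\<lambda>z. pu f z * g z + f z * pu g z)"
    and "continuous_on S (\<lambda>z. pv f z * g z + f z * pv g z)"
    using assms C1_on_imp_continuous_on[OF assms(1)] C1_on_imp_continuous_on[OF assms(2)]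
    unfolding C1_on_def by (auto intro!: continuous_intros)
  fix z assume "z \<in> S"
  with assms have "f differentiable (at z)" "g differentiable (at z)"
    by (simp_all add: C1_on_imp_differentiable)
  then show "(\<lambda>z. f z * g z) differentiable (at z)"
    and "pu (\<lambda>z. f z * g z) z = pu f z * g z + f z * pu g z"
    and "pv (\<lambda>z. f z * g z) z = pv f z * g z + f z * pv g z"
    by (simp_all add: pu_pv_mult derivative_intros)
qed

lemma C1_on_cnj:
  assumes "C1_on S f"
  shows "C1_on S (\<lambda>z. cnj (f z))"
proof (rule C1_onI_partials)
  show "continuous_on S (\<lambda>z. cnj (pu f z))" and "continuous_on S (\<lambda>z. cnj (pv f z))"
    using assms unfolding C1_on_def by (auto intro!: continuous_intros)
  fix z assume "z \<in> S"
  with assms show "(\<lambda>z. cnj (f z)) differentiable (at z)"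
    and "pu (\<lambda>z. cnj (f z)) z = cnj (pu f z)" and "pv (\<lambda>z. cnj (f z)) z = cnj (pv f z)"
    by (auto simp: differentiable_cnj_iff pu_pv_cnj C1_on_imp_differentiable)
qed

lemma C2_on_lincomb:
  assumes "open S" "C2_on S f" "C2_on S g"
  shows "C2_on S (\<lambda>z. a * f z + b * g z)"
proof -
  have d: "f differentiable (at z)" "g differentiable (at z)" if "z \<in> S" for z
    using assms that unfolding C2_on_def by (auto intro: C1_on_imp_differentiable)
  have "C1_on S (\<lambda>z. a * pu f z + b * pu g z)" "C1_on S (\<lambda>z. a * pv f z + b * pv g z)"
    using assms unfolding C2_on_def by (auto intro: C1_on_lincomb)
  then have "C1_on S (pu (\<lambda>z. a * f z + b * g z))" "C1_on S (pv (\<lambda>z. a * f z + b * g z))"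
    by (simp_all add: C1_on_cong[OF assms(1)] pu_pv_lincomb d)
  with assms show ?thesis unfolding C2_on_def by (auto intro: C1_on_lincomb)
qed

section \<open>Wirtinger derivatives\<close>

lemma dz_conv_pu_pv: "dz f = (\<lambda>z. (1/2) * pu f z + (- \<i>/2) * pv f z)"
  by (simp add: fun_eq_iff dz_def field_simps)

lemma dzb_conv_pu_pv: "dzb f = (\<lambda>z. (1/2) * pu f z + (\<i>/2) * pv f z)"
  by (simp add: fun_eq_iff dzb_def field_simps)

lemma C1_on_dz_dzb:
  assumes "C2_on S f"
  shows "C1_on S (dz f)" "C1_on S (dzb f)"
  using assms unfolding C2_on_def dz_conv_pu_pv dzb_conv_pu_pv by (blast intro: C1_on_lincomb)+

lemma dz_dzb_cong:
  assumes "open S" "z \<in> S" "\<And>w. w \<in> S \<Longrightarrow> f w = g w"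
  shows "dz f z = dz g z" "dzb f z = dzb g z"
  using pu_pv_cong[OF assms] by (simp_all add: dz_def dzb_def)

lemma dz_dzb_lincomb:
  assumes "f differentiable (at z)" "g differentiable (at z)"
  shows "dz (\<lambda>w. a * f w + b * g w) z = a * dz f z + b * dz g z"
    and "dzb (\<lambda>w. a * f w + b * g w) z = a * dzb f z + b * dzb g z"
  unfolding dz_def dzb_def pu_pv_lincomb[OF assms] by (simp_all add: field_simps)

lemma dz_dzb_cmult:
  assumes "f differentiable (at z)"
  shows "dz (\<lambda>w. c * f w) z = c * dz f z" "dzb (\<lambda>w. c * f w) z = c * dzb f z"
  using dz_dzb_lincomb[OF assms assms, of c 0] by simp_all

lemma dz_dzb_mult:
  assumes "f differentiable (at z)" "g differentiable (at z)"
  shows "dz (\<lambda>w. f w * g w) z = dz f z * g z + f z * dz g z"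
    and "dzb (\<lambda>w. f w * g w) z = dzb f z * g z + f z * dzb g z"
  unfolding dz_def dzb_def pu_pv_mult[OF assms] by (simp_all add: field_simps)

lemma dz_cnj:
  assumes "f differentiable (at z)"
  shows "dz (\<lambda>w. cnj (f w)) z = cnj (dzb f z)"
  unfolding dz_def dzb_def pu_pv_cnj[OF assms] by (simp add: complex_eq_iff)

lemma dzb_eq_cnj_dz_real_valued:
  assumes "open S" "z \<in> S" "\<And>w. w \<in> S \<Longrightarrow> Im (f w) = 0" "f differentiable (at z)"
  shows "dzb f z = cnj (dz f z)"
  using real_valued_partials[OF assms] by (simp add: dz_def dzb_def complex_eq_iff)

lemma Im_cr: "Im (cr P z) = 0"
  by (simp add: cr_def)

lemma dz_dzb_second_order:
  assumes "pu f differentiable (at z)" "pv f differentiable (at z)"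
  shows "dz (dzb f) z = (pu (pu f) z + \<i> * pu (pv f) z - \<i> * pv (pu f) z + pv (pv f) z) / 4"
    and "dzb (dz f) z = (pu (pu f) z - \<i> * pu (pv f) z + \<i> * pv (pu f) z + pv (pv f) z) / 4"
proof -
  have "dz (dzb f) z = (1/2) * dz (pu f) z + (\<i>/2) * dz (pv f) z"
    and "dzb (dz f) z = (1/2) * dzb (pu f) z + (- \<i>/2) * dzb (pv f) z"
    unfolding dzb_conv_pu_pv[of f] dz_conv_pu_pv[of f] by (rule dz_dzb_lincomb[OF assms])+
  note second = this
  show "dz (dzb f) z = (pu (pu f) z + \<i> * pu (pv f) z - \<i> * pv (pu f) z + pv (pv f) z) / 4"
    and "dzb (dz f) z = (pu (pu f) z - \<i> * pu (pv f) z + \<i> * pv (pu f) z + pv (pv f) z) / 4"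
    unfolding second dz_def[of "pu f"] dz_def[of "pv f"] dzb_def[of "pu f"] dzb_def[of "pv f"]
    by (simp_all add: field_simps)
qed

lemma holomorphic_pu_pv:
  assumes "f holomorphic_on S" "open S" "z \<in> S"
  shows "pu f z = deriv f z" "pv f z = \<i> * deriv f z"
proof -
  have "(f has_derivative (\<lambda>h. deriv f z * h)) (at z)"
    using holomorphic_derivI[OF assms] unfolding has_field_derivative_def .
  from pu_eq_derivative[OF this] pv_eq_derivative[OF this]
  show "pu f z = deriv f z" "pv f z = \<i> * deriv f z" by simp_all
qed

lemma holomorphic_dzb_eq_0:
  assumes "f holomorphic_on S" "open S" "z \<in> S"
  shows "dzb f z = 0"
  by (simp add: dzb_def holomorphic_pu_pv[OF assms])

lemma holomorphic_imp_C1_on: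
  assumes "f holomorphic_on S" "open S"
  shows "C1_on S f"
proof (rule C1_onI_partials)
  show "f differentiable (at z)" if "z \<in> S" for z
    using holomorphic_on_imp_differentiable_at[OF assms(1)] assms(2) that
    by (simp add: field_differentiable_imp_differentiable)
  have "continuous_on S (deriv f)"
    by (intro holomorphic_on_imp_continuous_on holomorphic_deriv assms)
  then show "continuous_on S (deriv f)" "continuous_on S (\<lambda>z. \<i> * deriv f z)"
    by (auto intro!: continuous_intros)
qed (use holomorphic_pu_pv[OF assms] in auto)

lemma holomorphic_imp_C2_on:
  assumes "f holomorphic_on S" "open S"
  shows "C2_on S f"
proof -
  have "deriv f holomorphic_on S" "(\<lambda>z. \<i> * deriv f z) holomorphic_on S"
    by (intro holomorphic_intros holomorphic_deriv assms)+
  then have "C1_on S (deriv f)" "C1_on S (\<lambda>z. \<i> * deriv f z)"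
    by (simp_all add: holomorphic_imp_C1_on assms(2))
  then have "C1_on S (pu f)" "C1_on S (pv f)"
    by (simp_all add: C1_on_cong[OF assms(2)] holomorphic_pu_pv[OF assms])
  then show ?thesis
    using holomorphic_imp_C1_on[OF assms] unfolding C2_on_def by blast
qed

lemma dzb_eq_0_imp_holomorphic:
  assumes "open S" "C1_on S f" "\<And>z. z \<in> S \<Longrightarrow> dzb f z = 0"
  shows "f holomorphic_on S"
proof -
  have "(f has_field_derivative pu f z) (at z)" if z: "z \<in> S" for z
  proof -
    have "pv f z = \<i> * pu f z"
      using assms(3)[OF z] by (simp add: dzb_def complex_eq_iff)
    then have "differential f z = (*) (pu f z)"
      by (simp add: differential_def fun_eq_iff complex_eq_iff algebra_simps)
    with has_derivative_differential[OF C1_on_imp_differentiable[OF assms(2) z]] show ?thesis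
      unfolding has_field_derivative_def by metis
  qed
  then show ?thesis
    using assms(1) by (metis at_within_open field_differentiable_def holomorphic_on_def)
qed

section \<open>Symmetry of mixed partial derivatives\<close>

lemma second_difference_mean_value:
  fixes \<phi> \<phi>' \<phi>'' :: "real \<Rightarrow> real \<Rightarrow> real"
  assumes "s > 0"
    and "\<And>t \<tau>. t \<in> {0..s} \<Longrightarrow> \<tau> \<in> {0..s} \<Longrightarrow> ((\<lambda>t. \<phi> t \<tau>) has_real_derivative \<phi>' t \<tau>) (at t)"
    and "\<And>t \<tau>. t \<in> {0..s} \<Longrightarrow> \<tau> \<in> {0..s} \<Longrightarrow> ((\<lambda>\<tau>. \<phi>' t \<tau>) has_real_derivative \<phi>'' t \<tau>) (at \<tau>)"
  shows "\<exists>t \<tau>. t \<in> {0<..<s} \<and> \<tau> \<in> {0<..<s} \<and> \<phi> s s - \<phi> s 0 - \<phi> 0 s + \<phi> 0 0 = s\<^sup>2 * \<phi>'' t \<tau>"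
proof -
  have "((\<lambda>t. \<phi> t s - \<phi> t 0) has_real_derivative \<phi>' t s - \<phi>' t 0) (at t)"
    if "0 \<le> t" "t \<le> s" for t
    using assms(1) that by (intro DERIV_diff assms(2)) auto
  from MVT2[OF assms(1) this] obtain t where t: "0 < t" "t < s"
    "(\<phi> s s - \<phi> s 0) - (\<phi> 0 s - \<phi> 0 0) = (s - 0) * (\<phi>' t s - \<phi>' t 0)"
    by blast
  have "((\<lambda>\<tau>. \<phi>' t \<tau>) has_real_derivative \<phi>'' t \<tau>) (at \<tau>)" if "0 \<le> \<tau>" "\<tau> \<le> s" for \<tau>
    using t that by (intro assms(3)) auto
  from MVT2[OF assms(1) this] obtain \<tau> where "0 < \<tau>" "\<tau> < s" "\<phi>' t s - \<phi>' t 0 = (s - 0) * \<phi>'' t \<tau>"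
    by blast
  with t show ?thesis
    by (intro exI[of _ t] exI[of _ \<tau>]) (simp add: power2_eq_square)
qed

lemma has_real_derivative_Re_partials:
  fixes f :: "complex \<Rightarrow> complex"
  assumes "f differentiable (at (z + of_real t + \<i> * of_real \<tau>))"
  shows "((\<lambda>t. Re (f (z + of_real t + \<i> * of_real \<tau>))) has_real_derivative
           Re (pu f (z + of_real t + \<i> * of_real \<tau>))) (at t)"
    and "((\<lambda>\<tau>. Re (f (z + of_real t + \<i> * of_real \<tau>))) has_real_derivative
           Re (pv f (z + of_real t + \<i> * of_real \<tau>))) (at \<tau>)"
proof -
  let ?p = "z + of_real t + \<i> * of_real \<tau>"
  have D: "(f has_derivative differential f ?p) (at ?p)"
    by (rule has_derivative_differential[OF assms])
  have "(z + \<i> * of_real \<tau>) + 1 * of_real t' = z + of_real t' + \<i> * of_real \<tau>" for t' :: real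
    by simp
  note along_u = has_vector_derivative_along_line[of f "differential f ?p" "z + \<i> * of_real \<tau>" 1 t,
      unfolded this, OF D]
  note along_v = has_vector_derivative_along_line[of f "differential f ?p" "z + of_real t" \<i> \<tau>, OF D]
  show "((\<lambda>t. Re (f (z + of_real t + \<i> * of_real \<tau>))) has_real_derivative Re (pu f ?p)) (at t)"
    using bounded_linear.has_vector_derivative[OF bounded_linear_Re along_u]
    by (simp add: has_real_derivative_iff_has_vector_derivative differential_def)
  show "((\<lambda>\<tau>. Re (f (z + of_real t + \<i> * of_real \<tau>))) has_real_derivative Re (pv f ?p)) (at \<tau>)"
    using bounded_linear.has_vector_derivative[OF bounded_linear_Re along_v]
    by (simp add: has_real_derivative_iff_has_vector_derivative differential_def)
qed

text \<open>Both orders of differentiation compute the same second difference of \<open>Re f\<close> over the square.\<close>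

lemma Re_mixed_partials_agree_in_square:
  assumes S: "open S" and f: "C2_on S f" and "s > 0"
    and in_S: "\<And>t \<tau>. t \<in> {0..s} \<Longrightarrow> \<tau> \<in> {0..s} \<Longrightarrow> z + of_real t + \<i> * of_real \<tau> \<in> S"
  shows "\<exists>t1 \<tau>1 t2 \<tau>2. t1 \<in> {0<..<s} \<and> \<tau>1 \<in> {0<..<s} \<and> t2 \<in> {0<..<s} \<and> \<tau>2 \<in> {0<..<s} \<and>
    Re (pv (pu f) (z + of_real t1 + \<i> * of_real \<tau>1)) = Re (pu (pv f) (z + of_real t2 + \<i> * of_real \<tau>2))"
proof -
  have diff: "f differentiable (at w)" "pu f differentiable (at w)" "pv f differentiable (at w)"
    if "w \<in> S" for w
    using f that unfolding C2_on_def by (auto intro: C1_on_imp_differentiable)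
  define F where "F t \<tau> = Re (f (z + of_real t + \<i> * of_real \<tau>))" for t \<tau>
  have Fu: "((\<lambda>t. F t \<tau>) has_real_derivative Re (pu f (z + of_real t + \<i> * of_real \<tau>))) (at t)"
    and puv: "((\<lambda>\<tau>. Re (pu f (z + of_real t + \<i> * of_real \<tau>))) has_real_derivative
               Re (pv (pu f) (z + of_real t + \<i> * of_real \<tau>))) (at \<tau>)"
    if "t \<in> {0..s}" "\<tau> \<in> {0..s}" for t \<tau>
    unfolding F_def using that by (auto intro!: has_real_derivative_Re_partials diff in_S)
  have Fv: "((\<lambda>\<tau>. F t \<tau>) has_real_derivative Re (pv f (z + of_real t + \<i> * of_real \<tau>))) (at \<tau>)"
    and pvu: "((\<lambda>t. Re (pv f (z + of_real t + \<i> * of_real \<tau>))) has_real_derivative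
               Re (pu (pv f) (z + of_real t + \<i> * of_real \<tau>))) (at t)"
    if "\<tau> \<in> {0..s}" "t \<in> {0..s}" for \<tau> t
    unfolding F_def using that by (auto intro!: has_real_derivative_Re_partials diff in_S)
  obtain t1 \<tau>1 where "t1 \<in> {0<..<s}" "\<tau>1 \<in> {0<..<s}"
    and "F s s - F s 0 - F 0 s + F 0 0 = s\<^sup>2 * Re (pv (pu f) (z + of_real t1 + \<i> * of_real \<tau>1))"
    using second_difference_mean_value[OF \<open>s > 0\<close> Fu puv] by blast
  moreover obtain \<tau>2 t2 where "\<tau>2 \<in> {0<..<s}" "t2 \<in> {0<..<s}"
    and "F s s - F 0 s - F s 0 + F 0 0 = s\<^sup>2 * Re (pu (pv f) (z + of_real t2 + \<i> * of_real \<tau>2))"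
    using second_difference_mean_value[OF \<open>s > 0\<close> Fv pvu] by blast
  ultimately show ?thesis
    using \<open>s > 0\<close> by (smt (verit) mult_cancel_left power_not_zero)
qed

lemma Re_mixed_partials_commute:
  assumes S: "open S" and f: "C2_on S f" and z: "z \<in> S"
  shows "Re (pu (pv f) z) = Re (pv (pu f) z)"
proof (rule ccontr)
  define A B where "A = Re (pv (pu f) z)" and "B = Re (pu (pv f) z)"
  define e where "e = \<bar>A - B\<bar> / 2"
  assume "Re (pu (pv f) z) \<noteq> Re (pv (pu f) z)"
  then have "e > 0" by (simp add: e_def A_def B_def)
  have near: "eventually (\<lambda>w. \<bar>Re (g w) - Re (g z)\<bar> < e) (at z)" if "continuous_on S g" for g
  proof -
    have "isCont (\<lambda>w. Re (g w)) z"
      using that S z by (simp add: continuous_on_eq_continuous_at continuous_intros)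
    from tendstoD[OF this[unfolded isCont_def] \<open>e > 0\<close>] show ?thesis
      by (simp add: dist_real_def)
  qed
  have "continuous_on S (pv (pu f))" "continuous_on S (pu (pv f))"
    using f unfolding C2_on_def C1_on_def by simp_all
  from eventually_conj[OF eventually_at_in_open'[OF S z] eventually_conj[OF near[OF this(1)] near[OF this(2)]]]
  obtain d where "d > 0" and d: "\<And>w. w \<noteq> z \<Longrightarrow> dist w z < d \<Longrightarrow>
      w \<in> S \<and> \<bar>Re (pv (pu f) w) - A\<bar> < e \<and> \<bar>Re (pu (pv f) w) - B\<bar> < e"
    unfolding eventually_at A_def B_def by auto
  define s where "s = d / 3"
  have "s > 0" using \<open>d > 0\<close> by (simp add: s_def)
  have close: "dist (z + of_real t + \<i> * of_real \<tau>) z < d" if "t \<in> {0..s}" "\<tau> \<in> {0..s}" for t \<tau>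
  proof -
    have "dist (z + of_real t + \<i> * of_real \<tau>) z \<le> cmod (of_real t) + cmod (\<i> * of_real \<tau>)"
      by (simp add: dist_norm norm_triangle_ineq del: norm_of_real)
    also have "\<dots> \<le> 2 * s" using that by (simp add: norm_mult)
    finally show ?thesis using \<open>d > 0\<close> by (simp add: s_def)
  qed
  have "z + of_real t + \<i> * of_real \<tau> \<in> S" if "t \<in> {0..s}" "\<tau> \<in> {0..s}" for t \<tau>
    using d[OF _ close[OF that]] z by metis
  from Re_mixed_partials_agree_in_square[OF S f \<open>s > 0\<close> this]
  obtain t1 \<tau>1 t2 \<tau>2 where t: "t1 \<in> {0<..<s}" "\<tau>1 \<in> {0<..<s}" "t2 \<in> {0<..<s}" "\<tau>2 \<in> {0<..<s}"
    and "Re (pv (pu f) (z + of_real t1 + \<i> * of_real \<tau>1)) = Re (pu (pv f) (z + of_real t2 + \<i> * of_real \<tau>2))"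
    by blast
  moreover have "z + of_real t + \<i> * of_real \<tau> \<noteq> z" if "t \<in> {0<..<s}" for t \<tau>
    using that by (simp add: complex_eq_iff)
  then have "\<bar>Re (pv (pu f) (z + of_real t1 + \<i> * of_real \<tau>1)) - A\<bar> < e"
    and "\<bar>Re (pu (pv f) (z + of_real t2 + \<i> * of_real \<tau>2)) - B\<bar> < e"
    using d close t by auto
  ultimately show False
    unfolding e_def by (simp add: abs_if split: if_split_asm)
qed

lemma laplacian_real_valued:
  assumes S: "open S" and f: "C2_on S f" and real: "\<And>w. w \<in> S \<Longrightarrow> Im (f w) = 0" and z: "z \<in> S"
  shows "dzb (dz f) z = dz (dzb f) z" "Im (dz (dzb f) z) = 0"
proof -
  have d: "f differentiable (at w)" "pu f differentiable (at w)" "pv f differentiable (at w)"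
    if "w \<in> S" for w
    using f that unfolding C2_on_def by (auto intro: C1_on_imp_differentiable)
  have re: "Im (pu f w) = 0" "Im (pv f w) = 0" if "w \<in> S" for w
    using real_valued_partials[OF S that real d(1)[OF that]] by simp_all
  have "Im (pu (pu f) z) = 0" "Im (pv (pu f) z) = 0" "Im (pu (pv f) z) = 0" "Im (pv (pv f) z) = 0"
    using real_valued_partials[OF S z re(1) d(2)[OF z]] real_valued_partials[OF S z re(2) d(3)[OF z]]
    by simp_all
  with Re_mixed_partials_commute[OF S f z]
  show "dzb (dz f) z = dz (dzb f) z" "Im (dz (dzb f) z) = 0"
    unfolding dz_dzb_second_order[OF d(2,3)[OF z]] by (simp_all add: complex_eq_iff)
qed

section \<open>Potentials of closed real 1-forms\<close>

lemma differential_scale: "differential G w (of_real s * k) = of_real s * differential G w k"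
  by (simp add: differential_def algebra_simps)

text \<open>\<open>Im (dzb G w) = 0\<close> is the closedness of the real 1-form \<open>Re (G dz)\<close>.\<close>

lemma Re_differential_symmetric:
  assumes "Im (dzb G w) = 0"
  shows "Re (differential G w h * k) = Re (differential G w k * h)"
proof -
  have "Im (pu G w) = - Re (pv G w)"
    using assms by (simp add: dzb_def)
  then show ?thesis
    by (simp add: differential_def algebra_simps)
qed

lemma convex_of_real_mult_mem:
  assumes "convex W" "0 \<in> W" "x \<in> W" "0 \<le> t" "t \<le> 1"
  shows "of_real t * x \<in> W"
  using convexD_alt[OF assms(1-3), where u = t] assms(4,5) by (simp add: scaleR_conv_of_real)

lemma has_derivative_Re_radial:
  assumes "G differentiable (at (of_real t * x))"
  shows "((\<lambda>x. Re (G (of_real t * x) * x)) has_derivative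
      (\<lambda>h. t * Re (differential G (of_real t * x) h * x) + Re (G (of_real t * x) * h))) (at x within W)"
proof -
  from has_derivative_compose[OF has_derivative_mult_right[OF has_derivative_ident]
      has_derivative_differential[OF assms]]
  have "((\<lambda>x. G (of_real t * x)) has_derivative (\<lambda>h. differential G (of_real t * x) (of_real t * h)))
      (at x within W)" .
  from bounded_linear.has_derivative[OF bounded_linear_Re has_derivative_mult[OF this has_derivative_ident]]
  show ?thesis
    unfolding differential_scale by (simp add: algebra_simps)
qed

lemma has_derivative_radial_integral:
  assumes W: "open W" "convex W" "0 \<in> W" and G: "C1_on W G" and z: "z \<in> W"
  shows "((\<lambda>x. integral {0..1} (\<lambda>t. Re (G (of_real t * x) * x))) has_derivative
      (\<lambda>h. integral {0..1} (\<lambda>t. t * Re (differential G (of_real t * z) h * z) + Re (G (of_real t * z) * h))))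
      (at z)"
proof -
  have ray: "of_real t * x \<in> W" if "x \<in> W" "t \<in> cbox 0 1" for x t
    using that by (intro convex_of_real_mult_mem W) auto
  define fx where "fx x t = Blinfun (\<lambda>h. t * Re (differential G (of_real t * x) h * x) + Re (G (of_real t * x) * h))"
    for x t
  have "bounded_linear (\<lambda>h. t * Re (differential G w h * x) + Re (G w * h))" for t w x
    unfolding linear_conv_bounded_linear[symmetric]
    by (rule linearI) (simp_all add: differential_def algebra_simps scaleR_conv_of_real)
  then have fx: "blinfun_apply (fx x t) = (\<lambda>h. t * Re (differential G (of_real t * x) h * x) + Re (G (of_real t * x) * h))"
    for x t
    unfolding fx_def by (rule bounded_linear_Blinfun_apply)
  have der: "((\<lambda>x. Re (G (of_real t * x) * x)) has_derivative blinfun_apply (fx x t)) (at x within W)"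
    if "x \<in> W" "t \<in> cbox 0 1" for x t
    unfolding fx using G ray[OF that] by (intro has_derivative_Re_radial C1_on_imp_differentiable)
  have int: "(\<lambda>t. Re (G (of_real t * x) * x)) integrable_on cbox 0 1" if "x \<in> W" for x
  proof (rule integrable_continuous)
    have "continuous_on (cbox 0 1) (\<lambda>t::real. G (of_real t * x))"
      using ray[OF that] by (intro continuous_on_compose2[OF C1_on_imp_continuous_on[OF G]] continuous_intros) auto
    then show "continuous_on (cbox 0 1) (\<lambda>t. Re (G (of_real t * x) * x))"
      by (intro continuous_intros)
  qed
  have cont: "continuous_on (W \<times> cbox 0 1) (\<lambda>(x, t). fx x t)"
  proof (rule continuous_on_blinfun_componentwise)
    have "(\<lambda>y. of_real (snd y) * fst y) ` (W \<times> cbox 0 1) \<subseteq> W"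
      using ray by auto
    then have "continuous_on (W \<times> cbox 0 1) (\<lambda>y. g (of_real (snd y) * fst y))"
      if "continuous_on W g" for g :: "complex \<Rightarrow> complex"
      by (intro continuous_on_compose2[OF that] continuous_intros) auto
    then show "continuous_on (W \<times> cbox 0 1) (\<lambda>y. blinfun_apply ((\<lambda>(x, t). fx x t) y) h)" for h
      using G C1_on_imp_continuous_on[OF G]
      by (auto simp: case_prod_beta fx differential_def C1_on_def intro!: continuous_intros)
  qed
  have "((\<lambda>x. integral (cbox 0 1) (\<lambda>t. Re (G (of_real t * x) * x))) has_derivative
      blinfun_apply (integral (cbox 0 1) (fx z))) (at z)"
    using leibniz_rule[OF der int cont z W(2)] by (simp add: at_within_open[OF z W(1)])
  moreover have "continuous_on (cbox 0 1) (\<lambda>t. (\<lambda>(x, t). fx x t) (z, t))"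
    using z by (intro continuous_on_compose2[OF cont] continuous_intros) auto
  then have "fx z integrable_on cbox 0 1"
    by (intro integrable_continuous) simp
  then have "blinfun_apply (integral (cbox 0 1) (fx z)) = (\<lambda>h. integral (cbox 0 1) (\<lambda>t. blinfun_apply (fx z t) h))"
    by (intro ext blinfun_apply_integral)
  ultimately show ?thesis
    by (simp add: fx)
qed

lemma radial_integrand_has_integral:
  assumes W: "convex W" "0 \<in> W" and G: "C1_on W G"
    and closed: "\<And>w. w \<in> W \<Longrightarrow> Im (dzb G w) = 0" and z: "z \<in> W"
  shows "((\<lambda>t. t * Re (differential G (of_real t * z) h * z) + Re (G (of_real t * z) * h))
      has_integral Re (G z * h)) {0..1}"
proof -
  \<comment> \<open>By closedness, the integrand is the derivative of \<open>\<psi>\<close>.\<close>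
  define \<psi> where "\<psi> t = t * Re (G (of_real t * z) * h)" for t :: real
  have "(\<psi> has_vector_derivative t * Re (differential G (of_real t * z) h * z) + Re (G (of_real t * z) * h))
      (at t within {0..1})" if "t \<in> {0..1}" for t
  proof -
    have tz: "of_real t * z \<in> W"
      using that by (intro convex_of_real_mult_mem W z) auto
    have "(G has_derivative differential G (of_real t * z)) (at (of_real t * z))"
      using G tz by (intro has_derivative_differential C1_on_imp_differentiable)
    from has_derivative_compose[OF has_derivative_mult_left[OF has_derivative_of_real[OF has_derivative_ident]] this]
    have "((\<lambda>t. Re (G (of_real t * z) * h)) has_derivative
        (\<lambda>s. Re (differential G (of_real t * z) (of_real s * z) * h))) (at t)"
      by (intro bounded_linear.has_derivative[OF bounded_linear_Re] has_derivative_mult_left)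
    from has_derivative_mult[OF has_derivative_ident this]
    have "(\<psi> has_derivative (\<lambda>s. t * Re (differential G (of_real t * z) (of_real s * z) * h)
        + s * Re (G (of_real t * z) * h))) (at t)"
      unfolding \<psi>_def .
    moreover have "Re (differential G (of_real t * z) (of_real s * z) * h)
        = s * Re (differential G (of_real t * z) h * z)" for s
      using Re_differential_symmetric[OF closed[OF tz], of z h]
      by (simp add: differential_scale mult.assoc)
    ultimately have "(\<psi> has_derivative
        (\<lambda>s. s *\<^sub>R (t * Re (differential G (of_real t * z) h * z) + Re (G (of_real t * z) * h)))) (at t)"
      by (simp only:) (simp add: algebra_simps)
    then show ?thesis
      unfolding has_vector_derivative_def by (rule has_derivative_at_withinI)
  qed
  from fundamental_theorem_of_calculus[OF _ this] show ?thesis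
    by (simp add: \<psi>_def)
qed

lemma closed_form_has_potential_convex:
  assumes W: "open W" "convex W" "0 \<in> W" and G: "C1_on W G"
    and closed: "\<And>w. w \<in> W \<Longrightarrow> Im (dzb G w) = 0"
  shows "\<exists>m. \<forall>z\<in>W. (m has_derivative (\<lambda>h. Re (G z * h))) (at z)"
proof -
  have "((\<lambda>x. integral {0..1} (\<lambda>t. Re (G (of_real t * x) * x))) has_derivative (\<lambda>h. Re (G z * h))) (at z)"
    if z: "z \<in> W" for z
  proof -
    have "(\<lambda>h. integral {0..1} (\<lambda>t. t * Re (differential G (of_real t * z) h * z) + Re (G (of_real t * z) * h)))
        = (\<lambda>h. Re (G z * h))"
      by (intro ext integral_unique radial_integrand_has_integral[OF W(2,3) G closed z])
    with has_derivative_radial_integral[OF W G z] show ?thesis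
      by simp
  qed
  then show ?thesis by blast
qed

lemma C1_on_compose_holomorphic:
  assumes F: "C1_on S F" and g: "g holomorphic_on B" "open B" "g ` B \<subseteq> S"
  shows "C1_on B (\<lambda>w. F (g w))"
    and "\<And>w. w \<in> B \<Longrightarrow> dzb (\<lambda>w. F (g w)) w = cnj (deriv g w) * dzb F (g w)"
proof -
  have D: "((\<lambda>w. F (g w)) has_derivative (\<lambda>h. differential F (g w) (deriv g w * h))) (at w)"
    if "w \<in> B" for w
  proof -
    have "(g has_derivative (\<lambda>h. deriv g w * h)) (at w)"
      using holomorphic_derivI[OF g(1,2) that] unfolding has_field_derivative_def .
    moreover have "(F has_derivative differential F (g w)) (at (g w))"
      using F g(3) that by (intro has_derivative_differential C1_on_imp_differentiable) auto
    ultimately show ?thesis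
      by (rule has_derivative_compose)
  qed
  have pu: "pu (\<lambda>w. F (g w)) w = differential F (g w) (deriv g w)"
    and pv: "pv (\<lambda>w. F (g w)) w = differential F (g w) (deriv g w * \<i>)" if "w \<in> B" for w
    using pu_eq_derivative[OF D[OF that]] pv_eq_derivative[OF D[OF that]] by simp_all
  have "continuous_on B g"
    using g(1) by (rule holomorphic_on_imp_continuous_on)
  with F g(3) have "continuous_on B (\<lambda>w. pu F (g w))" "continuous_on B (\<lambda>w. pv F (g w))"
    unfolding C1_on_def by (auto intro: continuous_on_compose2)
  moreover have "continuous_on B (deriv g)"
    using g by (intro holomorphic_on_imp_continuous_on holomorphic_deriv)
  ultimately show "C1_on B (\<lambda>w. F (g w))"
    by (intro C1_onI_partials[OF _ _ _ pu pv])
       (auto simp: differential_def differentiable_def intro!: continuous_intros D)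
  show "dzb (\<lambda>w. F (g w)) w = cnj (deriv g w) * dzb F (g w)" if "w \<in> B" for w
    by (simp add: dzb_def pu[OF that] pv[OF that] differential_def complex_eq_iff algebra_simps)
qed

lemma closed_form_compose_holomorphic:
  assumes F: "C1_on S F" and closed: "\<And>z. z \<in> S \<Longrightarrow> Im (dzb F z) = 0"
    and g: "g holomorphic_on B" "open B" "g ` B \<subseteq> S"
  shows "C1_on B (\<lambda>w. F (g w) * deriv g w)"
    and "\<And>w. w \<in> B \<Longrightarrow> Im (dzb (\<lambda>w. F (g w) * deriv g w) w) = 0"
proof -
  note comp = C1_on_compose_holomorphic[OF F g]
  have g': "C1_on B (deriv g)" "deriv g holomorphic_on B"
    using g by (simp_all add: holomorphic_imp_C1_on holomorphic_deriv)
  show "C1_on B (\<lambda>w. F (g w) * deriv g w)"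
    by (rule C1_on_mult[OF comp(1) g'(1)])
  fix w assume w: "w \<in> B"
  have "dzb (\<lambda>w. F (g w) * deriv g w) w = cnj (deriv g w) * deriv g w * dzb F (g w)"
    using dz_dzb_mult(2)[OF C1_on_imp_differentiable[OF comp(1) w] C1_on_imp_differentiable[OF g'(1) w]]
      comp(2)[OF w] holomorphic_dzb_eq_0[OF g'(2) g(2) w]
    by simp
  also have "\<dots> = of_real ((cmod (deriv g w))\<^sup>2) * dzb F (g w)"
    using complex_norm_square[of "deriv g w"] by (metis mult.commute)
  finally show "Im (dzb (\<lambda>w. F (g w) * deriv g w) w) = 0"
    using closed[of "g w"] g(3) w by auto
qed

lemma potential_compose_left_inverse:
  assumes S: "open S" and f: "f holomorphic_on S" and g: "g holomorphic_on B" "open B"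
    and fg: "\<And>z. z \<in> S \<Longrightarrow> f z \<in> B \<and> g (f z) = z"
    and m: "\<And>w. w \<in> B \<Longrightarrow> (m has_derivative (\<lambda>h. Re (F (g w) * deriv g w * h))) (at w)"
    and z: "z \<in> S"
  shows "((\<lambda>z. m (f z)) has_derivative (\<lambda>h. Re (F z * h))) (at z)"
proof -
  have fd: "(f has_field_derivative deriv f z) (at z)"
    by (rule holomorphic_derivI[OF f S z])
  have "(g has_field_derivative deriv g (f z)) (at (f z))"
    using holomorphic_derivI[OF g] fg z by auto
  from DERIV_chain[OF this fd]
  have "((\<lambda>z. g (f z)) has_field_derivative deriv g (f z) * deriv f z) (at z)"
    by (simp add: o_def)
  moreover have "((\<lambda>z. g (f z)) has_field_derivative 1) (at z)"
    by (rule has_field_derivative_transform_within_open[OF DERIV_ident S z]) (simp add: fg)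
  ultimately have "deriv g (f z) * deriv f z = 1"
    by (rule DERIV_unique)
  then have "F (g (f z)) * deriv g (f z) * (deriv f z * h) = F z * h" for h
    using fg z by (metis mult.assoc mult_1)
  with has_derivative_compose[OF fd[unfolded has_field_derivative_def] m] fg z show ?thesis
    by (simp only:)
qed

lemma closed_form_has_potential:
  assumes S: "open S" "simply_connected S" and F: "C1_on S F"
    and closed: "\<And>z. z \<in> S \<Longrightarrow> Im (dzb F z) = 0"
  shows "\<exists>m. \<forall>z\<in>S. (m has_derivative (\<lambda>h. Re (F z * h))) (at z)"
proof -
  have "S = {} \<or> S = UNIV \<or> (\<exists>f g. f holomorphic_on S \<and> g holomorphic_on ball 0 1 \<and>
      (\<forall>z\<in>S. f z \<in> ball 0 1 \<and> g (f z) = z) \<and> (\<forall>z\<in>ball 0 1. g z \<in> S \<and> f (g z) = z))"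
    using Riemann_mapping_theorem S by blast
  then show ?thesis
  proof (elim disjE exE conjE)
    assume "S = {}"
    then show ?thesis by simp
  next
    assume "S = UNIV"
    then show ?thesis
      using closed_form_has_potential_convex[of UNIV F] F closed by simp
  next
    fix f g assume f: "f holomorphic_on S" and g: "g holomorphic_on ball 0 1"
      and fg: "\<forall>z\<in>S. f z \<in> ball 0 1 \<and> g (f z) = z" and gf: "\<forall>z\<in>ball 0 1. g z \<in> S \<and> f (g z) = z"
    have gB: "g ` ball 0 1 \<subseteq> S" using gf by auto
    \<comment> \<open>The form pulls back to \<open>Re (F (g w) g'(w) dw)\<close> on the disc.\<close>
    note pullback = closed_form_compose_holomorphic[OF F closed g open_ball gB]
    have "0 \<in> ball (0::complex) 1" by simp
    from closed_form_has_potential_convex[OF open_ball convex_ball this pullback]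
    obtain m where m: "\<And>w. w \<in> ball 0 1 \<Longrightarrow> (m has_derivative (\<lambda>h. Re (F (g w) * deriv g w * h))) (at w)"
      by blast
    have "((\<lambda>z. m (f z)) has_derivative (\<lambda>h. Re (F z * h))) (at z)" if "z \<in> S" for z
      using fg that by (intro potential_compose_left_inverse[OF S(1) f g open_ball _ m]) auto
    then show ?thesis by blast
  qed
qed

text \<open>For real \<open>M\<close>, \<open>dM = 2 Re (F dz)\<close> means exactly \<open>dz M = F\<close>.\<close>

lemma potential_C2_on:
  assumes S: "open S" and F: "C1_on S F"
    and M: "\<And>z. z \<in> S \<Longrightarrow> (M has_derivative (\<lambda>h. 2 * Re (F z * h))) (at z)"
  shows "C2_on S (cr M)" "\<And>z. z \<in> S \<Longrightarrow> dz (cr M) z = F z"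
proof -
  have D: "(cr M has_derivative (\<lambda>h. of_real (2 * Re (F z * h)))) (at z)" if "z \<in> S" for z
    unfolding cr_def by (rule has_derivative_of_real[OF M[OF that]])
  have pu: "pu (cr M) z = 1 * F z + 1 * cnj (F z)"
    and pv: "pv (cr M) z = \<i> * F z + (- \<i>) * cnj (F z)" if "z \<in> S" for z
    using pu_eq_derivative[OF D[OF that]] pv_eq_derivative[OF D[OF that]]
    by (simp_all add: complex_eq_iff)
  have C1a: "C1_on S (\<lambda>z. 1 * F z + 1 * cnj (F z))"
    and C1b: "C1_on S (\<lambda>z. \<i> * F z + (- \<i>) * cnj (F z))"
    by (rule C1_on_lincomb[OF F C1_on_cnj[OF F]])+
  have "C1_on S (cr M)"
    using D by (intro C1_onI_partials[OF _ C1_on_imp_continuous_on[OF C1a] C1_on_imp_continuous_on[OF C1b] pu pv])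
      (auto simp: differentiable_def)
  moreover have "C1_on S (pu (cr M))" "C1_on S (pv (cr M))"
    by (rule C1_on_cong[OF S _ C1a], simp add: pu) (rule C1_on_cong[OF S _ C1b], simp add: pv)
  ultimately show "C2_on S (cr M)"
    unfolding C2_on_def by blast
  show "dz (cr M) z = F z" if "z \<in> S" for z
    by (simp add: dz_def pu[OF that] pv[OF that] complex_eq_iff)
qed

section \<open>Weierstrass data\<close>

definition M_derivative ::
    "(complex \<Rightarrow> complex) \<Rightarrow> (complex \<Rightarrow> real) \<Rightarrow> (complex \<Rightarrow> real) \<Rightarrow> complex \<Rightarrow> complex"
  where "M_derivative g P Q z = 1 / g z * dz (cr P) z + g z * dz (cr Q) z"

lemma WD1_holomorphic:
  assumes "open \<Omega>" "WD1 \<Omega> g P Q"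
  shows "g holomorphic_on \<Omega>" "(\<lambda>z. 1 / g z) holomorphic_on \<Omega>"
proof -
  show g: "g holomorphic_on \<Omega>"
    using assms by (intro dzb_eq_0_imp_holomorphic) (auto simp: WD1_def C2_on_def)
  show "(\<lambda>z. 1 / g z) holomorphic_on \<Omega>"
    using assms(2) by (intro holomorphic_intros g) (auto simp: WD1_def)
qed

lemma C1_on_M_derivative:
  assumes "open \<Omega>" "WD1 \<Omega> g P Q"
  shows "C1_on \<Omega> (M_derivative g P Q)"
proof -
  have "C1_on \<Omega> (\<lambda>z. 1 * ((1 / g z) * dz (cr P) z) + 1 * (g z * dz (cr Q) z))"
    using assms holomorphic_imp_C1_on[OF WD1_holomorphic(2)[OF assms] assms(1)]
    by (intro C1_on_lincomb C1_on_mult C1_on_dz_dzb) (auto simp: WD1_def C2_on_def)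
  then show ?thesis
    by (simp add: M_derivative_def[abs_def])
qed

lemma dzb_M_derivative:
  assumes \<Omega>: "open \<Omega>" and WD1: "WD1 \<Omega> g P Q" and z: "z \<in> \<Omega>"
  shows "dzb (M_derivative g P Q) z = of_real (2 * Re (g z) * Re (dz (dzb (cr Q)) z))"
proof -
  have CP: "C2_on \<Omega> (cr P)" and CQ: "C2_on \<Omega> (cr Q)" and g: "C2_on \<Omega> g"
    and gz: "g z \<noteq> 0" and laplace: "dz (dzb (cr P)) z = of_real ((cmod (g z))\<^sup>2) * dz (dzb (cr Q)) z"
    using WD1 z by (auto simp: WD1_def)
  note hol = WD1_holomorphic[OF \<Omega> WD1]
  note \<Delta>P = laplacian_real_valued[OF \<Omega> CP Im_cr z]
  note \<Delta>Q = laplacian_real_valued[OF \<Omega> CQ Im_cr z]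
  define r where "r = Re (dz (dzb (cr Q)) z)"
  have r: "dz (dzb (cr Q)) z = of_real r"
    using \<Delta>Q(2) by (simp add: r_def complex_eq_iff)
  have d: "(\<lambda>z. 1 / g z) differentiable (at z)" "g differentiable (at z)"
    "dz (cr P) differentiable (at z)" "dz (cr Q) differentiable (at z)"
    using holomorphic_imp_C1_on[OF hol(2) \<Omega>] g C1_on_dz_dzb(1)[OF CP] C1_on_dz_dzb(1)[OF CQ] z
    by (auto intro: C1_on_imp_differentiable simp: C2_on_def)
  have "dzb (M_derivative g P Q) z
      = 1 / g z * dzb (dz (cr P)) z + g z * dzb (dz (cr Q)) z"
    using dz_dzb_lincomb(2)[of _ z _ 1 1, OF differentiable_mult[OF d(1,3)] differentiable_mult[OF d(2,4)]]
      dz_dzb_mult(2)[OF d(1,3)] dz_dzb_mult(2)[OF d(2,4)]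
      holomorphic_dzb_eq_0[OF hol(2) \<Omega> z] holomorphic_dzb_eq_0[OF hol(1) \<Omega> z]
    by (simp add: M_derivative_def[abs_def])
  also have "\<dots> = 1 / g z * (g z * cnj (g z)) * of_real r + g z * of_real r"
    using \<Delta>P(1) \<Delta>Q(1) laplace r unfolding complex_norm_square by simp
  also have "\<dots> = (g z + cnj (g z)) * of_real r"
    using gz by (simp add: field_simps)
  also have "\<dots> = of_real (2 * Re (g z) * r)"
    by (simp add: complex_add_cnj)
  finally show ?thesis
    by (simp add: r_def)
qed

lemma WD1_M_exists:
  assumes \<Omega>: "open \<Omega>" "simply_connected \<Omega>" and WD1: "WD1 \<Omega> g P Q"
  shows "\<exists>M. C2_on \<Omega> (cr M) \<and> (\<forall>z\<in>\<Omega>. dz (cr M) z = M_derivative g P Q z)"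
proof -
  note F = C1_on_M_derivative[OF \<Omega>(1) WD1]
  have "Im (dzb (M_derivative g P Q) z) = 0" if "z \<in> \<Omega>" for z
    using dzb_M_derivative[OF \<Omega>(1) WD1 that] by simp
  with closed_form_has_potential[OF \<Omega> F] obtain m
    where "\<And>z. z \<in> \<Omega> \<Longrightarrow> (m has_derivative (\<lambda>h. Re (M_derivative g P Q z * h))) (at z)"
    by blast
  then have "((\<lambda>z. 2 * m z) has_derivative (\<lambda>h. 2 * Re (M_derivative g P Q z * h))) (at z)"
    if "z \<in> \<Omega>" for z
    using that by (intro has_derivative_mult_right)
  from potential_C2_on[OF \<Omega>(1) F this] show ?thesis
    by blast
qed

lemma second_kind_defect_identity:
  fixes g a b :: complex
  assumes "g \<noteq> 0"
  shows "1 / g * a + g * b - of_real (Re (1 / g)) * (2 * a) = - (1 / cnj g) * (a - of_real ((cmod g)\<^sup>2) * b)"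
proof -
  have "of_real (Re (1 / g)) * 2 = 1 / g + 1 / cnj g"
    using complex_add_cnj[of "1 / g"] by simp
  then have "1 / g * a + g * b - of_real (Re (1 / g)) * (2 * a) = - (1 / cnj g) * (a - g * cnj g * b)"
    using assms by (simp add: field_simps)
  then show ?thesis
    by (simp only: complex_norm_square)
qed

lemma cr_scale: "cr (\<lambda>z. c * P z) = (\<lambda>z. of_real c * cr P z)"
  by (simp add: cr_def fun_eq_iff)

lemma M_derivative_defect:
  assumes \<Omega>: "open \<Omega>" and WD1: "WD1 \<Omega> g P Q" and z: "z \<in> \<Omega>"
    and dM: "dz (cr M) z = M_derivative g P Q z"
  shows "dz (cr M) z - of_real (Re (1 / g z)) * dz (cr (\<lambda>z. 2 * P z)) z
      = - (1 / cnj (g z)) * (dz (cr P) z - of_real ((cmod (g z))\<^sup>2) * dz (cr Q) z)"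
proof -
  have "cr P differentiable (at z)" and "g z \<noteq> 0"
    using WD1 z by (auto intro: C1_on_imp_differentiable simp: WD1_def C2_on_def)
  from dz_dzb_cmult(1)[OF this(1)] second_kind_defect_identity[OF this(2)] show ?thesis
    by (simp add: dM cr_scale M_derivative_def)
qed

lemma laplacian_M:
  assumes \<Omega>: "open \<Omega>" and WD1: "WD1 \<Omega> g P Q" and CM: "C2_on \<Omega> (cr M)"
    and dM: "\<And>z. z \<in> \<Omega> \<Longrightarrow> dz (cr M) z = M_derivative g P Q z" and z: "z \<in> \<Omega>"
  shows "dz (dzb (cr M)) z = of_real (Re (1 / g z)) * dz (dzb (cr (\<lambda>z. 2 * P z))) z"
proof -
  have CP: "C2_on \<Omega> (cr P)" and CQ: "C2_on \<Omega> (cr Q)" and gz: "g z \<noteq> 0"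
    and laplace: "dz (dzb (cr P)) z = of_real ((cmod (g z))\<^sup>2) * dz (dzb (cr Q)) z"
    using WD1 z by (auto simp: WD1_def)
  have "dzb (cr M) w = cnj (M_derivative g P Q w)" if "w \<in> \<Omega>" for w
    using dzb_eq_cnj_dz_real_valued[where f = "cr M", OF \<Omega> that Im_cr] CM dM that
    by (auto intro: C1_on_imp_differentiable simp: C2_on_def)
  then have "dz (dzb (cr M)) z = dz (\<lambda>w. cnj (M_derivative g P Q w)) z"
    by (rule dz_dzb_cong(1)[OF \<Omega> z])
  also have "\<dots> = cnj (dzb (M_derivative g P Q) z)"
    by (rule dz_cnj[OF C1_on_imp_differentiable[OF C1_on_M_derivative[OF \<Omega> WD1] z]])
  also have "\<dots> = of_real (2 * Re (g z) * Re (dz (dzb (cr Q)) z))"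
    using dzb_M_derivative[OF \<Omega> WD1 z] by simp
  also have "\<dots> = of_real (Re (1 / g z)) * (2 * dz (dzb (cr P)) z)"
  proof -
    define r where "r = Re (dz (dzb (cr Q)) z)"
    have "dz (dzb (cr Q)) z = of_real r"
      using laplacian_real_valued(2)[OF \<Omega> CQ Im_cr z] by (simp add: r_def complex_eq_iff)
    then have "of_real (Re (1 / g z)) * (2 * dz (dzb (cr P)) z)
        = of_real (2 * (Re (1 / g z) * (cmod (g z))\<^sup>2) * r)"
      unfolding laplace by simp
    moreover have "Re (1 / g z) * (cmod (g z))\<^sup>2 = Re (g z)"
      using gz by (simp add: Re_divide cmod_power2)
    ultimately show ?thesis
      by (simp add: r_def)
  qed
  also have "\<dots> = of_real (Re (1 / g z)) * dz (dzb (cr (\<lambda>z. 2 * P z))) z"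
  proof -
    have "cr P differentiable (at w)" if "w \<in> \<Omega>" for w
      using CP that by (auto intro: C1_on_imp_differentiable simp: C2_on_def)
    moreover have "dzb (cr P) differentiable (at z)"
      using C1_on_dz_dzb(2)[OF CP] z by (rule C1_on_imp_differentiable)
    ultimately show ?thesis
      using dz_dzb_cong(1)[OF \<Omega> z, of "dzb (\<lambda>z. 2 * cr P z)" "\<lambda>w. 2 * dzb (cr P) w"]
        dz_dzb_cmult(2) dz_dzb_cmult(1) z
      by (simp add: cr_scale)
  qed
  finally show ?thesis .
qed

lemma WD2_of_WD1:
  assumes \<Omega>: "open \<Omega>" and WD1: "WD1 \<Omega> g P Q" and CM: "C2_on \<Omega> (cr M)"
    and dM: "\<And>z. z \<in> \<Omega> \<Longrightarrow> dz (cr M) z = M_derivative g P Q z"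
  shows "WD2 \<Omega> (\<lambda>z. 1 / g z) M (\<lambda>z. 2 * P z)"
  unfolding WD2_def
proof (intro conjI ballI)
  note hol = WD1_holomorphic[OF \<Omega> WD1]
  show "C2_on \<Omega> (\<lambda>z. 1 / g z)"
    by (rule holomorphic_imp_C2_on[OF hol(2) \<Omega>])
  show "C2_on \<Omega> (cr (\<lambda>z. 2 * P z))"
    using C2_on_lincomb[OF \<Omega>, of "cr P" "cr P" 2 0] WD1 by (simp add: cr_scale WD1_def)
  fix z assume z: "z \<in> \<Omega>"
  then have "g z \<noteq> 0" "dz (cr P) z - of_real ((cmod (g z))\<^sup>2) * dz (cr Q) z \<noteq> 0"
    using WD1 by (auto simp: WD1_def)
  then show "dz (cr M) z - of_real (Re (1 / g z)) * dz (cr (\<lambda>z. 2 * P z)) z \<noteq> 0"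
    by (simp add: M_derivative_defect[OF \<Omega> WD1 z dM[OF z]])
  show "1 / g z \<noteq> 0" "dzb (\<lambda>z. 1 / g z) z = 0"
    using \<open>g z \<noteq> 0\<close> holomorphic_dzb_eq_0[OF hol(2) \<Omega> z] by simp_all
  show "dz (dzb (cr M)) z = of_real (Re (1 / g z)) * dz (dzb (cr (\<lambda>z. 2 * P z))) z"
    by (rule laplacian_M[OF \<Omega> WD1 CM dM z])
qed (rule CM)

theorem mainTheorem1:
  fixes \<Omega> :: "complex set" and g :: "complex \<Rightarrow> complex" and P Q :: "complex \<Rightarrow> real"
  assumes "open \<Omega>" and "connected \<Omega>" and "simply_connected \<Omega>"
    and "WD1 \<Omega> g P Q"
  defines "h \<equiv> (\<lambda>z. 1 / g z)" and "N \<equiv> (\<lambda>z. 2 * P z)"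
  shows "(\<exists>M :: complex \<Rightarrow> real. C2_on \<Omega> (cr M) \<and>
            (\<forall>z\<in>\<Omega>. dz (cr M) z = (1 / g z) * dz (cr P) z + g z * dz (cr Q) z))
       \<and> (\<forall>M :: complex \<Rightarrow> real. C2_on \<Omega> (cr M) \<and>
            (\<forall>z\<in>\<Omega>. dz (cr M) z = (1 / g z) * dz (cr P) z + g z * dz (cr Q) z) \<longrightarrow>
            WD2 \<Omega> h M N \<and>
            (\<forall>z\<in>\<Omega>. dz (cr M) z - complex_of_real (Re (h z)) * dz (cr N) z
               = - (1 / cnj (g z)) * (dz (cr P) z - complex_of_real ((cmod (g z))\<^sup>2) * dz (cr Q) z)))"
proof -
  have "\<exists>M. C2_on \<Omega> (cr M) \<and> (\<forall>z\<in>\<Omega>. dz (cr M) z = (1 / g z) * dz (cr P) z + g z * dz (cr Q) z)"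
    using WD1_M_exists[OF assms(1,3,4)] by (simp add: M_derivative_def)
  moreover have "WD2 \<Omega> h M N \<and> (\<forall>z\<in>\<Omega>. dz (cr M) z - complex_of_real (Re (h z)) * dz (cr N) z
      = - (1 / cnj (g z)) * (dz (cr P) z - complex_of_real ((cmod (g z))\<^sup>2) * dz (cr Q) z))"
    if "C2_on \<Omega> (cr M)" "\<forall>z\<in>\<Omega>. dz (cr M) z = (1 / g z) * dz (cr P) z + g z * dz (cr Q) z" for M
  proof -
    have dM: "\<And>z. z \<in> \<Omega> \<Longrightarrow> dz (cr M) z = M_derivative g P Q z"
      using that(2) by (simp add: M_derivative_def)
    with WD2_of_WD1[OF assms(1,4) that(1) dM] M_derivative_defect[OF assms(1,4)] show ?thesis
      unfolding h_def N_def by blast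
  qed
  ultimately show ?thesis
    by blast
qed

end
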